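(* Let $\Sigma$ be a set containing $0$, $(\Gamma,\oplus)$ an abelian group, and $f:\Sigma^n\to\Gamma$. If $f$ has both $K$-separable and $L$-separable arguments for partitions $K=\{K_1,\ldots,K_k\}$ and $L=\{L_1,\ldots,L_l\}$ of $[n]$, then $f$ has $(K\wedge L)$-separable arguments, where $K\wedge L=\{K_i\cap L_j: i\in[k],\,j\in[l]\}\setminus\{\emptyset\}$.
   Context: $[n]=\{1,\ldots,n\}$; for $M=\{i_1<\cdots<i_m\}\subseteq[n]$ and $\bar x=(x_1,\ldots,x_n)$, $\bar x_M=(x_{i_1},\ldots,x_{i_m})$. A function $f:\Sigma^n\to\Gamma$ has $K$-separable arguments (for a partition $K=\{K_1,\ldots,K_k\}$ of $[n]$ into nonempty sets) if there exist functions $f_j:\Sigma^{|K_j|}\to\Gamma$ with $f(\bar x)=f_1(\bar x_{K_1})\oplus\cdots\oplus f_k(\bar x_{K_k})$ for all $\bar x$. *)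

theory Defs
  imports Main "HOL-Library.Disjoint_Sets"
begin

text \<open>Tuples in Sigma^n are lists of length n with entries in S; positions are
  numbered 1..n as in the paper, so [n] = {1..n}.\<close>

definition sub :: "'a list \<Rightarrow> nat set \<Rightarrow> 'a list" where
  "sub xs M = nths xs ((\<lambda>i. i - 1) ` M)"

definition separable ::
  "'a set \<Rightarrow> nat \<Rightarrow> ('a list \<Rightarrow> 'b::ab_group_add) \<Rightarrow> nat set set \<Rightarrow> bool" where
  "separable S n f K \<longleftrightarrow>
     (\<exists>g :: nat set \<Rightarrow> 'a list \<Rightarrow> 'b.
        \<forall>xs. length xs = n \<and> set xs \<subseteq> S \<longrightarrow> f xs = (\<Sum>B\<in>K. g B (sub xs B)))"

definition meet :: "nat set set \<Rightarrow> nat set set \<Rightarrow> nat set set" where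
  "meet K L = {A \<inter> B | A B. A \<in> K \<and> B \<in> L} - {{}}"

end

theory Submission
  imports Defs
begin

text \<open>Write x|M for the tuple that agrees with x on the positions in M and is 0 elsewhere.
  If f(x) = sum of g_A(x_A) over the blocks A of K, then f(x|A) - f(0) = g_A(x_A) - g_A(0), hence
  f(x) = f(0) + sum over A of (f(x|A) - f(0)). Applying this to K, and then to L at each x|A,
  gives f(x) = f(0) + sum over A, B of (f(x|(A \<inter> B)) - f(0)). Pairs with A \<inter> B = {} contribute
  nothing, every other summand depends only on the coordinates in A \<inter> B, and the constant f(0)
  is absorbed into one of them.\<close>

lemma nths_eq_map_nth: "nths xs I = map ((!) xs) (filter (\<lambda>i. i \<in> I) [0..<length xs])"
proof -
  have "zip xs [0..<length xs] = map (\<lambda>i. (xs ! i, i)) [0..<length xs]"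
    by (rule nth_equalityI) auto
  then show ?thesis
    by (simp add: nths_def filter_map comp_def)
qed

lemma nths_eq_nths_iff:
  "length xs = length ys \<Longrightarrow> nths xs I = nths ys I \<longleftrightarrow> (\<forall>i<length xs. i \<in> I \<longrightarrow> xs ! i = ys ! i)"
  by (auto simp: nths_eq_map_nth)

text \<open>Since sub shifts positions by the truncated i - 1, a position 0 would alias position 1.\<close>

lemma sub_eq_nths: "0 \<notin> M \<Longrightarrow> sub xs M = nths xs {i. Suc i \<in> M}"
proof -
  assume "0 \<notin> M"
  then have "(\<lambda>i. i - 1) ` M = {i. Suc i \<in> M}"
  proof (intro equalityI subsetI)
    fix i assume "i \<in> (\<lambda>i. i - 1) ` M"
    then obtain j where "j \<in> M" "i = j - 1" by blast
    with \<open>0 \<notin> M\<close> show "i \<in> {i. Suc i \<in> M}" by (cases j) auto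
  next
    fix i assume "i \<in> {i. Suc i \<in> M}"
    then show "i \<in> (\<lambda>i. i - 1) ` M" by (force intro: image_eqI[where x = "Suc i"])
  qed
  then show ?thesis
    by (simp add: sub_def)
qed

lemma sub_eq_sub_iff:
  "0 \<notin> M \<Longrightarrow> length xs = length ys \<Longrightarrow>
    sub xs M = sub ys M \<longleftrightarrow> (\<forall>i<length xs. Suc i \<in> M \<longrightarrow> xs ! i = ys ! i)"
  by (simp add: sub_eq_nths nths_eq_nths_iff)

definition zero_outside :: "nat set \<Rightarrow> 'a::zero list \<Rightarrow> 'a list" where
  "zero_outside M xs = map (\<lambda>i. if Suc i \<in> M then xs ! i else 0) [0..<length xs]"

lemma length_zero_outside [simp]: "length (zero_outside M xs) = length xs"
  by (simp add: zero_outside_def)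

lemma nth_zero_outside [simp]:
  "i < length xs \<Longrightarrow> zero_outside M xs ! i = (if Suc i \<in> M then xs ! i else 0)"
  by (simp add: zero_outside_def)

lemma set_zero_outside_subset: "0 \<in> S \<Longrightarrow> set xs \<subseteq> S \<Longrightarrow> set (zero_outside M xs) \<subseteq> S"
  by (auto simp: zero_outside_def)

lemma zero_outside_zero_outside [simp]:
  "zero_outside A (zero_outside B xs) = zero_outside (A \<inter> B) xs"
  by (rule nth_equalityI) auto

lemma zero_outside_empty [simp]: "zero_outside {} xs = replicate (length xs) 0"
  by (rule nth_equalityI) auto

lemma sub_zero_outside_subset: "0 \<notin> A \<Longrightarrow> A \<subseteq> M \<Longrightarrow> sub (zero_outside M xs) A = sub xs A"
  by (auto simp: sub_eq_sub_iff)

lemma sub_zero_outside_disjoint: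
  "0 \<notin> A \<Longrightarrow> A \<inter> M = {} \<Longrightarrow> sub (zero_outside M xs) A = sub (replicate (length xs) 0) A"
  by (auto simp: sub_eq_sub_iff)

lemma zero_outside_eq_if_sub_eq:
  "0 \<notin> M \<Longrightarrow> length xs = length ys \<Longrightarrow> sub xs M = sub ys M \<Longrightarrow>
    zero_outside M xs = zero_outside M ys"
  by (rule nth_equalityI) (auto simp: sub_eq_sub_iff)

lemma separable_sum_zero_outside:
  fixes F :: "nat set \<Rightarrow> 'a::zero list \<Rightarrow> 'b::ab_group_add"
  assumes "finite P" "P \<noteq> {}" "0 \<notin> \<Union>P"
    and f: "\<And>xs. length xs = n \<Longrightarrow> set xs \<subseteq> S \<Longrightarrow> f xs = c + (\<Sum>M\<in>P. F M (zero_outside M xs))"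
  shows "separable S n f P"
proof -
  obtain M0 where "M0 \<in> P" using assms(2) by blast
  define g where "g M ys =
      F M (zero_outside M (SOME xs. length xs = n \<and> sub xs M = ys)) + (if M = M0 then c else 0)"
    for M ys
  have g: "g M (sub xs M) = F M (zero_outside M xs) + (if M = M0 then c else 0)"
    if "M \<in> P" "length xs = n" for M xs
  proof -
    let ?ys = "SOME ys. length ys = n \<and> sub ys M = sub xs M"
    have "length ?ys = n \<and> sub ?ys M = sub xs M"
      by (rule someI[of _ xs]) (use that in simp)
    then have "zero_outside M ?ys = zero_outside M xs"
      using zero_outside_eq_if_sub_eq assms(3) that by auto
    then show ?thesis by (simp add: g_def)
  qed
  show ?thesis unfolding separable_def
  proof (intro exI[of _ g] allI impI)
    fix xs assume xs: "length xs = n \<and> set xs \<subseteq> S"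
    have "(\<Sum>M\<in>P. g M (sub xs M)) =
        (\<Sum>M\<in>P. F M (zero_outside M xs)) + (\<Sum>M\<in>P. if M = M0 then c else 0)"
      using g xs by (simp add: sum.distrib)
    also have "\<dots> = f xs"
      using f xs \<open>M0 \<in> P\<close> assms(1) by simp
    finally show "f xs = (\<Sum>M\<in>P. g M (sub xs M))" by simp
  qed
qed

lemma separable_eq_sum_zero_outside:
  fixes f :: "'a::zero list \<Rightarrow> 'b::ab_group_add"
  assumes "0 \<in> S" "partition_on X K" "finite X" "0 \<notin> X" "separable S n f K"
    and xs: "length xs = n" "set xs \<subseteq> S"
  shows "f xs = f (replicate n 0) + (\<Sum>A\<in>K. f (zero_outside A xs) - f (replicate n 0))"
proof -
  let ?zs = "replicate n 0 :: 'a list"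
  obtain g where g: "\<And>ys. length ys = n \<Longrightarrow> set ys \<subseteq> S \<Longrightarrow> f ys = (\<Sum>A\<in>K. g A (sub ys A))"
    using assms(5) unfolding separable_def by blast
  have "finite K" using finite_elements[OF assms(3,2)] .
  have zero: "set ?zs \<subseteq> S" using assms(1) by (simp add: set_replicate_conv_if)
  have block: "f (zero_outside A xs) - f ?zs = g A (sub xs A) - g A (sub ?zs A)" if "A \<in> K" for A
  proof -
    have sub_block: "sub (zero_outside A xs) A' = (if A' = A then sub xs A else sub ?zs A')"
      if "A' \<in> K" for A'
    proof -
      have "0 \<notin> A'" using partition_onD1[OF assms(2)] assms(4) \<open>A' \<in> K\<close> by blast
      moreover have "A' \<noteq> A \<Longrightarrow> A' \<inter> A = {}"
        using disjointD[OF partition_onD2[OF assms(2)]] \<open>A \<in> K\<close> \<open>A' \<in> K\<close> by blast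
      ultimately show ?thesis
        using xs by (auto simp: sub_zero_outside_subset sub_zero_outside_disjoint)
    qed
    have "f (zero_outside A xs) - f ?zs =
        (\<Sum>A'\<in>K. g A' (sub (zero_outside A xs) A') - g A' (sub ?zs A'))"
      using g xs zero set_zero_outside_subset[OF assms(1)] by (simp add: sum_subtractf)
    also have "\<dots> = (\<Sum>A'\<in>K. if A' = A then g A (sub xs A) - g A (sub ?zs A) else 0)"
      by (rule sum.cong) (simp_all add: sub_block)
    also have "\<dots> = g A (sub xs A) - g A (sub ?zs A)"
      using \<open>finite K\<close> that by simp
    finally show ?thesis .
  qed
  have "f xs - f ?zs = (\<Sum>A\<in>K. g A (sub xs A) - g A (sub ?zs A))"
    using g xs zero by (simp add: sum_subtractf)
  also have "\<dots> = (\<Sum>A\<in>K. f (zero_outside A xs) - f ?zs)"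
    using block by simp
  finally show ?thesis by (simp add: algebra_simps)
qed

lemma partition_on_meet:
  assumes "partition_on X K" "partition_on X L"
  shows "partition_on X (meet K L)"
proof (rule partition_onI)
  show "\<Union>(meet K L) = X"
  proof
    show "\<Union>(meet K L) \<subseteq> X"
      using partition_onD1[OF assms(1)] by (auto simp: meet_def)
    show "X \<subseteq> \<Union>(meet K L)"
    proof
      fix x assume "x \<in> X"
      then obtain A B where "A \<in> K" "B \<in> L" "x \<in> A" "x \<in> B"
        using partition_onD1[OF assms(1)] partition_onD1[OF assms(2)] by blast
      then show "x \<in> \<Union>(meet K L)" unfolding meet_def by blast
    qed
  qed
  show "{} \<notin> meet K L" by (simp add: meet_def)
  fix M M' assume "M \<in> meet K L" "M' \<in> meet K L" "M \<noteq> M'"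
  then obtain A B A' B' where "A \<in> K" "B \<in> L" "A' \<in> K" "B' \<in> L"
    and M: "M = A \<inter> B" "M' = A' \<inter> B'" and "A \<noteq> A' \<or> B \<noteq> B'"
    by (auto simp: meet_def)
  then have "A \<inter> A' = {} \<or> B \<inter> B' = {}"
    using disjointD[OF partition_onD2[OF assms(1)]] disjointD[OF partition_onD2[OF assms(2)]]
    by blast
  then show "disjnt M M'" unfolding M disjnt_def by blast
qed

lemma sum_meet:
  fixes F :: "nat set \<Rightarrow> 'b::comm_monoid_add"
  assumes "partition_on X K" "partition_on X L" "finite X" "F {} = 0"
  shows "(\<Sum>A\<in>K. \<Sum>B\<in>L. F (A \<inter> B)) = (\<Sum>M\<in>meet K L. F M)"
proof -
  have fin: "finite (K \<times> L)"
    using finite_elements[OF assms(3,1)] finite_elements[OF assms(3,2)] by simp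
  have "(\<Sum>A\<in>K. \<Sum>B\<in>L. F (A \<inter> B)) = (\<Sum>(A, B)\<in>K \<times> L. F (A \<inter> B))"
    by (simp add: sum.cartesian_product)
  also have "\<dots> = (\<Sum>M\<in>(\<lambda>(A, B). A \<inter> B) ` (K \<times> L). F M)"
  proof -
    have "sum F ((\<lambda>(A, B). A \<inter> B) ` (K \<times> L)) = sum (F \<circ> (\<lambda>(A, B). A \<inter> B)) (K \<times> L)"
    proof (rule sum.reindex_nontrivial[OF fin])
      fix p q assume pq: "p \<in> K \<times> L" "q \<in> K \<times> L" "p \<noteq> q"
        "(\<lambda>(A, B). A \<inter> B) p = (\<lambda>(A, B). A \<inter> B) q"
      obtain A B A' B' where [simp]: "p = (A, B)" "q = (A', B')" by force
      have "A \<inter> B = {}"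
        using pq disjointD[OF partition_onD2[OF assms(1)], of A A']
          disjointD[OF partition_onD2[OF assms(2)], of B B'] by auto
      then show "F ((\<lambda>(A, B). A \<inter> B) p) = 0" using assms(4) by simp
    qed
    then show ?thesis by (simp add: case_prod_unfold comp_def)
  qed
  also have "\<dots> = (\<Sum>M\<in>meet K L. F M)"
    using fin assms(4) by (intro sum.mono_neutral_right) (auto simp: meet_def)
  finally show ?thesis .
qed

theorem lemmaA3:
  fixes S :: "'a::zero set" and n :: nat and f :: "'a list \<Rightarrow> 'b::ab_group_add"
    and K L :: "nat set set"
  assumes "0 \<in> S"
    and "partition_on {1..n} K" and "partition_on {1..n} L"
    and "separable S n f K" and "separable S n f L"
  shows "separable S n f (meet K L)"
proof (cases "meet K L = {}")
  case True
  then have "K = {}"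
    using partition_on_meet[OF assms(2,3)] assms(2) by (auto simp: partition_on_def)
  with True assms(4) show ?thesis by simp
next
  case False
  let ?zs = "replicate n 0"
  have "f xs = f ?zs + (\<Sum>M\<in>meet K L. f (zero_outside M xs) - f ?zs)"
    if xs: "length xs = n" "set xs \<subseteq> S" for xs
  proof -
    have "f xs = f ?zs + (\<Sum>A\<in>K. f (zero_outside A xs) - f ?zs)"
      using separable_eq_sum_zero_outside[OF assms(1,2) _ _ assms(4) xs] by simp
    also have "\<dots> = f ?zs + (\<Sum>A\<in>K. \<Sum>B\<in>L. f (zero_outside (A \<inter> B) xs) - f ?zs)"
      using separable_eq_sum_zero_outside[OF assms(1,3) _ _ assms(5)]
        set_zero_outside_subset[OF assms(1) xs(2)] xs(1)
      by (simp add: Int_commute)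
    also have "\<dots> = f ?zs + (\<Sum>M\<in>meet K L. f (zero_outside M xs) - f ?zs)"
      using sum_meet[OF assms(2,3), where F = "\<lambda>M. f (zero_outside M xs) - f ?zs"] xs(1)
      by simp
    finally show ?thesis .
  qed
  then show ?thesis
    using partition_on_meet[OF assms(2,3)] finite_elements[of "{1..n}" "meet K L"]
    by (intro separable_sum_zero_outside[OF _ False, where F = "\<lambda>M ys. f ys - f ?zs"])
      (auto simp: partition_on_def)
qed

end
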